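(* Let $n$ be a positive integer and $g=3n+2$. If $G$ is a pure $(2n+1)$-sparse gapset of genus $g$, then $G$ is not symmetric.
   Context: A gapset is a finite set $G\subset\mathbb{N}=\{1,2,\dots\}$ such that whenever $z\in G$ and $z=x+y$ with $x,y\in\mathbb{N}$, then $x\in G$ or $y\in G$; its genus is $g=\#G$. Writing $G=\{\ell_1<\dots<\ell_g\}$, the Frobenius number is $F(G)=\ell_g$; $G$ is symmetric if $F(G)=2g-1$. $G$ is pure $\kappa$-sparse if $\ell_{i+1}-\ell_i\le\kappa$ for all $i$ with equality for some $i$. *)

theory Defs
  imports Main
begin

definition gapset :: "nat set \<Rightarrow> bool" where
  "gapset G \<longleftrightarrow> finite G \<and> 0 \<notin> G \<and>
     (\<forall>z\<in>G. \<forall>x y. x \<ge> 1 \<and> y \<ge> 1 \<and> z = x + y \<longrightarrow> x \<in> G \<or> y \<in> G)"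

definition genus :: "nat set \<Rightarrow> nat" where
  "genus G = card G"

definition frobenius :: "nat set \<Rightarrow> nat" where
  "frobenius G = Max G"

definition symmetric_gapset :: "nat set \<Rightarrow> bool" where
  "symmetric_gapset G \<longleftrightarrow> frobenius G = 2 * genus G - 1"

definition pure_sparse :: "nat \<Rightarrow> nat set \<Rightarrow> bool" where
  "pure_sparse \<kappa> G \<longleftrightarrow>
     (let l = sorted_list_of_set G in
       (\<forall>i. i + 1 < length l \<longrightarrow> l ! (i+1) - l ! i \<le> \<kappa>) \<and>
       (\<exists>i. i + 1 < length l \<and> l ! (i+1) - l ! i = \<kappa>))"

end

theory Submission
  imports Defs
begin

text \<open>Write \<open>m = 2n + 1\<close>, so that symmetry means \<open>F = 3m\<close>. For a symmetric gapset,
  \<open>x \<in> G \<longleftrightarrow> F - x \<notin> G\<close> on \<open>[0, F]\<close>; hence \<open>m \<in> G\<close> (otherwise \<open>F = m + m + m\<close> would be a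
  non-gap) and \<open>2m = F - m \<notin> G\<close>. Purity gives consecutive gaps \<open>p < p + m\<close>. Now \<open>p < m\<close> puts
  the gap \<open>m\<close> strictly between them, \<open>p = m\<close> makes \<open>2m\<close> a gap, and \<open>m < p < 2m\<close> is impossible
  too: \<open>r = F - (p + m) = 2m - p\<close> is a non-gap, but \<open>F - 2r = 2p - m\<close> lies strictly between
  \<open>p\<close> and \<open>p + m\<close>, so \<open>2r\<close> would be a gap.\<close>

lemma gapset_add_nongaps:
  assumes "gapset G" "x \<notin> G" "y \<notin> G"
  shows "x + y \<notin> G"
proof
  assume "x + y \<in> G"
  moreover have "x \<ge> 1" "y \<ge> 1"
    using assms(2,3) \<open>x + y \<in> G\<close> by (cases x; cases y; simp)+
  ultimately show False
    using assms unfolding gapset_def by blast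
qed

lemma frobenius_in_gapset: "gapset G \<Longrightarrow> G \<noteq> {} \<Longrightarrow> frobenius G \<in> G"
  unfolding gapset_def frobenius_def by simp

lemma gapset_le_frobenius: "gapset G \<Longrightarrow> x \<in> G \<Longrightarrow> x \<le> frobenius G"
  unfolding gapset_def frobenius_def by simp

lemma frobenius_minus_nongap:
  assumes "gapset G" "G \<noteq> {}" "x \<le> frobenius G" "x \<notin> G"
  shows "frobenius G - x \<in> G"
  using gapset_add_nongaps[OF assms(1,4), of "frobenius G - x"] assms
    frobenius_in_gapset[OF assms(1,2)] by (auto simp: add.commute)

text \<open>The non-gaps in \<open>[0, F]\<close> are \<open>F + 1 - g = g\<close> many, and \<open>x \<mapsto> F - x\<close> maps them injectively
  into \<open>G\<close>, hence onto \<open>G\<close>.\<close>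

lemma symmetric_gapset_frobenius_minus_gap:
  assumes G: "gapset G" "G \<noteq> {}" and sym: "symmetric_gapset G" and "y \<in> G"
  shows "frobenius G - y \<notin> G"
proof -
  define F where "F = frobenius G"
  define A where "A = {0..F} - G"
  have fin: "finite G" using G unfolding gapset_def by simp
  have "G \<subseteq> {0..F}" using gapset_le_frobenius[OF G(1)] unfolding F_def by auto
  then have "card A = card G"
    using card_Diff_subset[OF fin] sym G(2) fin card_gt_0_iff[of G]
    unfolding A_def F_def symmetric_gapset_def genus_def by simp
  moreover have "inj_on (\<lambda>x. F - x) A" unfolding A_def inj_on_def by auto
  moreover have image_sub: "(\<lambda>x. F - x) ` A \<subseteq> G"
    using frobenius_minus_nongap[OF G] unfolding A_def F_def by auto
  ultimately have "(\<lambda>x. F - x) ` A = G"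
    using card_subset_eq[OF fin image_sub] card_image by metis
  with \<open>y \<in> G\<close> obtain x where "x \<in> A" "y = F - x" by blast
  then show ?thesis unfolding A_def F_def by auto
qed

lemma pure_sparse_obtains_jump:
  assumes "finite G" "pure_sparse \<kappa> G"
  obtains p where "p \<in> G" "p + \<kappa> \<in> G" "\<And>x. p < x \<Longrightarrow> x < p + \<kappa> \<Longrightarrow> x \<notin> G"
proof -
  define l where "l = sorted_list_of_set G"
  obtain i where i: "i + 1 < length l" "l ! (i + 1) - l ! i = \<kappa>"
    using assms(2) unfolding pure_sparse_def l_def Let_def by blast
  have set_l: "set l = G" and sorted: "sorted l"
    unfolding l_def using assms(1) by simp_all
  have jump: "l ! (i + 1) = l ! i + \<kappa>"
    using i sorted_nth_mono[OF sorted, of i "i + 1"] by simp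
  have "x \<notin> G" if "l ! i < x" "x < l ! i + \<kappa>" for x
  proof
    assume "x \<in> G"
    then obtain k where k: "k < length l" "l ! k = x" using set_l by (metis in_set_conv_nth)
    show False
    proof (cases "k \<le> i")
      case True
      then show False using sorted_nth_mono[OF sorted True] i k that by simp
    next
      case False
      then show False using sorted_nth_mono[OF sorted, of "i + 1" k] k that jump by simp
    qed
  qed
  moreover have "l ! i \<in> G" "l ! (i + 1) \<in> G" using i set_l by auto
  ultimately show thesis using that jump by simp
qed

lemma symmetric_gapset_no_jump_third_of_frobenius:
  assumes G: "gapset G" "G \<noteq> {}" and sym: "symmetric_gapset G"
    and F: "frobenius G = 3 * m"
    and p: "p \<in> G" "p + m \<in> G" and between: "\<And>x. p < x \<Longrightarrow> x < p + m \<Longrightarrow> x \<notin> G"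
  shows False
proof -
  have "m \<in> G"
  proof (rule ccontr)
    assume "m \<notin> G"
    then have "m + (m + m) \<notin> G" using gapset_add_nongaps[OF G(1)] by blast
    moreover have "m + (m + m) = 3 * m" by simp
    ultimately show False using frobenius_in_gapset[OF G] F by simp
  qed
  have "2 * m \<notin> G"
    using symmetric_gapset_frobenius_minus_gap[OF G sym \<open>m \<in> G\<close>] F by simp
  have "p \<noteq> 0" using p G unfolding gapset_def by auto
  have "p + m \<le> 3 * m" using gapset_le_frobenius[OF G(1) p(2)] F by simp
  consider "p < m" | "p = m" | "m < p" "p < 2 * m"
    using \<open>p + m \<le> 3 * m\<close> \<open>2 * m \<notin> G\<close> p(1) by fastforce
  then show False
  proof cases
    case 1
    then show False using between[of m] \<open>m \<in> G\<close> \<open>p \<noteq> 0\<close> by simp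
  next
    case 2
    then show False using p(2) \<open>2 * m \<notin> G\<close> by (simp add: mult_2)
  next
    case 3
    define r where "r = 2 * m - p"
    have "r \<notin> G"
      using symmetric_gapset_frobenius_minus_gap[OF G sym p(2)] F 3 unfolding r_def by simp
    then have "r + r \<notin> G" using gapset_add_nongaps[OF G(1)] by blast
    moreover have "frobenius G - (2 * p - m) \<in> G"
      using between[of "2 * p - m"] 3 F by (intro frobenius_minus_nongap[OF G]) simp_all
    moreover have "frobenius G - (2 * p - m) = r + r" using F 3 unfolding r_def by simp
    ultimately show False by simp
  qed
qed

theorem mainTheorem8:
  fixes n :: nat and G :: "nat set"
  assumes "n \<ge> 1"
    and "gapset G"
    and "genus G = 3 * n + 2"
    and "pure_sparse (2 * n + 1) G"
  shows "\<not> symmetric_gapset G"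
proof
  assume sym: "symmetric_gapset G"
  have "finite G" using assms(2) unfolding gapset_def by simp
  have "G \<noteq> {}" using assms(3) unfolding genus_def by auto
  have F: "frobenius G = 3 * (2 * n + 1)"
    using sym assms(3) unfolding symmetric_gapset_def by simp
  obtain p where "p \<in> G" "p + (2 * n + 1) \<in> G"
    "\<And>x. p < x \<Longrightarrow> x < p + (2 * n + 1) \<Longrightarrow> x \<notin> G"
    using pure_sparse_obtains_jump[OF \<open>finite G\<close> assms(4)] by blast
  then show False
    using symmetric_gapset_no_jump_third_of_frobenius[OF assms(2) \<open>G \<noteq> {}\<close> sym F] by blast
qed

end
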